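(* (Main) Let $\mathbb{K}$ be a field, $n>1$, $a=\sum_{j=0}^d c_j s^j\in\mathbb{K}[s]^n$ a non-zero row vector of degree $d$ ($c_j\in\mathbb{K}^n$), and $A\in\mathbb{K}^{(2d+1)\times n(d+1)}$ the matrix whose $(i,\,kn+r)$ entry ($1\le i\le 2d+1$, $0\le k\le d$, $1\le r\le n$) is the $r$-th entry of $c_{i-1-k}$ (zero if $i-1-k\notin\{0,\dots,d\}$). With $\tilde q$ and $b_r$ as in the context, the set $u=\{b_r^\flat\mid r\in\tilde q\}$ is a $\mu$-basis of $a$.
   Context: A column of a matrix is pivotal if it is either the first column and non-zero, or linearly independent of all previous columns; otherwise non-pivotal. $p$ is the set of pivotal indices of $A$, $q$ the set of non-pivotal indices, and $\tilde q=\{\min\varrho\mid\varrho\in q/(n)\}$ the basic non-pivotal indices (minimal elements of the classes of $q$ modulo $n$). For $i\in q$ write uniquely $A_{*i}=\sum_{\{j\in p\mid j<i\}}\alpha^{(i)}_jA_{*j}$ ($A_{*j}$ the $j$-th column) and set $b_i=e_i-\sum_{\{j\in p\mid j<i\}}\alpha^{(i)}_je_j$ ($e_i$ standard basis vectors of $\mathbb{K}^{n(d+1)}$). For $v=[w_0;\dots;w_d]\in\mathbb{K}^{n(d+1)}$ ($w_i\in\mathbb{K}^n$), $v^\flat=\sum_i s^iw_i\in\mathbb{K}[s]^n$. $\mathrm{syz}(a)=\{h\in\mathbb{K}[s]^n\mid a\,h=0\}$. For non-zero $h\in\mathbb{K}[s]^n$, $LV(h)\in\mathbb{K}^n$ is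 the vector of coefficients of $s^{\deg h}$ in its entries, $\deg h=\max_i\deg h_i$. A subset $u=\{u_1,\dots,u_{n-1}\}\subset\mathbb{K}[s]^n$ is a $\mu$-basis of $a$ if: (1) $u$ has exactly $n-1$ elements; (2) $LV(u_1),\dots,LV(u_{n-1})$ are linearly independent over $\mathbb{K}$; (3) $u$ is a basis of the $\mathbb{K}[s]$-module $\mathrm{syz}(a)$. *)

theory Defs
  imports "HOL-Computational_Algebra.Polynomial"
begin

(* Conventions: all indices are 0-based.
   A vector in K[s]^n is a function  nat => 'a poly  vanishing at indices >= n.
   A vector in K^N is a function  nat => 'a  (only indices < N are relevant).
   A matrix with m rows and N columns is a function  nat => nat => 'a
   (entry (i,j), only i < m, j < N relevant). *)

definition polyvec :: "nat \<Rightarrow> (nat \<Rightarrow> 'a::zero poly) \<Rightarrow> bool" where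
  "polyvec n h \<longleftrightarrow> (\<forall>r\<ge>n. h r = 0)"

definition pvdeg :: "nat \<Rightarrow> (nat \<Rightarrow> 'a::zero poly) \<Rightarrow> nat" where
  "pvdeg n h = Max ((\<lambda>r. degree (h r)) ` {..<n})"

definition LV :: "nat \<Rightarrow> (nat \<Rightarrow> 'a::zero poly) \<Rightarrow> nat \<Rightarrow> 'a" where
  "LV n h = (\<lambda>r. if r < n then coeff (h r) (pvdeg n h) else 0)"

definition syz :: "nat \<Rightarrow> (nat \<Rightarrow> 'a::comm_ring_1 poly) \<Rightarrow> (nat \<Rightarrow> 'a poly) set" where
  "syz n a = {h. polyvec n h \<and> (\<Sum>r<n. a r * h r) = 0}"

definition is_mu_basis :: "nat \<Rightarrow> (nat \<Rightarrow> 'a::field poly) \<Rightarrow> (nat \<Rightarrow> 'a poly) set \<Rightarrow> bool" where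
  "is_mu_basis n a u \<longleftrightarrow>
     \<comment> \<open>(1) exactly n-1 elements\<close>
     finite u \<and> card u = n - 1 \<and>
     \<comment> \<open>(2) the leading vectors LV(u_1),...,LV(u_{n-1}) are K-linearly independent\<close>
     (\<forall>c :: (nat \<Rightarrow> 'a poly) \<Rightarrow> 'a.
        (\<forall>r. (\<Sum>g\<in>u. c g * LV n g r) = 0) \<longrightarrow> (\<forall>g\<in>u. c g = 0)) \<and>
     \<comment> \<open>(3) u is a basis of the K[s]-module syz(a)\<close>
     u \<subseteq> syz n a \<and>
     (\<forall>h\<in>syz n a. \<exists>f :: (nat \<Rightarrow> 'a poly) \<Rightarrow> 'a poly. h = (\<lambda>r. \<Sum>g\<in>u. f g * g r)) \<and>
     (\<forall>f :: (nat \<Rightarrow> 'a poly) \<Rightarrow> 'a poly.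
        (\<lambda>r. \<Sum>g\<in>u. f g * g r) = (\<lambda>r. 0) \<longrightarrow> (\<forall>g\<in>u. f g = 0))"

text \<open>(2d+1) x n(d+1) matrix; entry (i, k*n + r) is the r-th entry of c_{i-k}
  (zero if i-k is not in {0..d}); 0-based version of the paper's indexing.\<close>
definition coeff_mat :: "nat \<Rightarrow> (nat \<Rightarrow> 'a::zero poly) \<Rightarrow> nat \<Rightarrow> nat \<Rightarrow> 'a" where
  "coeff_mat n a i j = (let k = j div n; r = j mod n in
      if k \<le> i then coeff (a r) (i - k) else 0)"

definition in_col_span :: "nat \<Rightarrow> (nat \<Rightarrow> nat \<Rightarrow> 'a::field) \<Rightarrow> nat set \<Rightarrow> nat \<Rightarrow> bool" where
  "in_col_span m A S j \<longleftrightarrow> (\<exists>c. \<forall>i<m. A i j = (\<Sum>l\<in>S. c l * A i l))"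

text \<open>pivotal: first column and non-zero, or linearly independent of (not in the span of)
  all previous columns; for j = 0 the span of no columns is {0}\<close>
definition pivotal :: "nat \<Rightarrow> (nat \<Rightarrow> nat \<Rightarrow> 'a::field) \<Rightarrow> nat \<Rightarrow> bool" where
  "pivotal m A j \<longleftrightarrow> \<not> in_col_span m A {..<j} j"

definition pivots :: "nat \<Rightarrow> nat \<Rightarrow> (nat \<Rightarrow> nat \<Rightarrow> 'a::field) \<Rightarrow> nat set" where
  "pivots m N A = {j. j < N \<and> pivotal m A j}"

definition nonpivots :: "nat \<Rightarrow> nat \<Rightarrow> (nat \<Rightarrow> nat \<Rightarrow> 'a::field) \<Rightarrow> nat set" where
  "nonpivots m N A = {j. j < N \<and> \<not> pivotal m A j}"

definition basic_nonpivots :: "nat \<Rightarrow> nat \<Rightarrow> nat \<Rightarrow> (nat \<Rightarrow> nat \<Rightarrow> 'a::field) \<Rightarrow> nat set" where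
  "basic_nonpivots n m N A =
     {j \<in> nonpivots m N A. \<forall>j'\<in>nonpivots m N A. j' mod n = j mod n \<longrightarrow> j \<le> j'}"

definition alpha :: "nat \<Rightarrow> nat \<Rightarrow> (nat \<Rightarrow> nat \<Rightarrow> 'a::field) \<Rightarrow> nat \<Rightarrow> nat \<Rightarrow> 'a" where
  "alpha m N A i = (THE c. (\<forall>j. c j \<noteq> 0 \<longrightarrow> j \<in> pivots m N A \<and> j < i) \<and>
      (\<forall>r<m. A r i = (\<Sum>j\<in>{j \<in> pivots m N A. j < i}. c j * A r j)))"

definition bvec :: "nat \<Rightarrow> nat \<Rightarrow> (nat \<Rightarrow> nat \<Rightarrow> 'a::field) \<Rightarrow> nat \<Rightarrow> nat \<Rightarrow> 'a" where
  "bvec m N A i = (\<lambda>k. (if k = i then 1 else 0) -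
      (if k \<in> pivots m N A \<and> k < i then alpha m N A i k else 0))"

text \<open>v = [w_0; ...; w_d] in K^{n(d+1)}  \<mapsto>  sum_k s^k w_k in K[s]^n\<close>
definition flat :: "nat \<Rightarrow> nat \<Rightarrow> (nat \<Rightarrow> 'a::comm_monoid_add) \<Rightarrow> nat \<Rightarrow> 'a poly" where
  "flat n d v = (\<lambda>r. if r < n then (\<Sum>k\<le>d. monom (v (k * n + r)) k) else 0)"

end

theory Submission
  imports Defs
begin

text \<open>
  Store the coefficient of \<open>s^k\<close> in entry \<open>r\<close> of \<open>h \<in> K[s]^n\<close> at index \<open>k n + r\<close>.
  For \<open>deg h \<le> d\<close> the equation \<open>a h = 0\<close> says exactly that this coefficient vector lies in
  the kernel of \<open>A\<close>, so a column \<open>j\<close> is non-pivotal iff some syzygy has its last non-zero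
  coefficient at index \<open>j\<close>, and then \<open>b\<^sub>j\<^sup>\<flat>\<close> is such a syzygy, with coefficient \<open>1\<close>
  at \<open>j\<close>.

  Let \<open>r\<^sub>0\<close> be the first entry where \<open>c\<^sub>d \<noteq> 0\<close>. Comparing coefficients of \<open>s^(d + deg h)\<close>
  in \<open>a h = 0\<close> shows that the last non-zero index of a syzygy is never \<open>\<equiv> r\<^sub>0 (mod n)\<close>,
  while the Koszul syzygy \<open>a\<^sub>r\<^sub>0 e\<^sub>r - a\<^sub>r e\<^sub>r\<^sub>0\<close> realises every other residue \<open>r\<close>.
  Hence the basic non-pivotal indices have exactly the \<open>n - 1\<close> residues \<open>\<noteq> r\<^sub>0\<close>.
  Since these residues are distinct, any non-trivial combination of the \<open>b\<^sub>j\<^sup>\<flat>\<close>, or of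
  their leading vectors, has a single term carrying the largest last non-zero index, which
  gives both kinds of independence; and cancelling last non-zero coefficients one at a time,
  as in a Gr\<ouml>bner basis reduction, writes every syzygy in terms of the \<open>b\<^sub>j\<^sup>\<flat>\<close>.
\<close>

section \<open>Pivotal columns\<close>

lemma in_col_span_if_dependent:
  fixes A :: "nat \<Rightarrow> nat \<Rightarrow> 'a::field"
  assumes dep: "\<forall>t<m. (\<Sum>l<Suc j. c l * A t l) = 0" and "c j \<noteq> 0"
  shows "in_col_span m A {..<j} j"
  unfolding in_col_span_def
proof (intro exI allI impI)
  fix t assume "t < m"
  then have "c j * A t j = - (\<Sum>l<j. c l * A t l)"
    using dep by (simp add: eq_neg_iff_add_eq_0 add.commute)
  then have "A t j = - (\<Sum>l<j. c l * A t l) / c j"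
    using \<open>c j \<noteq> 0\<close> by (simp add: field_simps)
  also have "\<dots> = (\<Sum>l<j. (- c l / c j) * A t l)"
    by (simp add: sum_divide_distrib sum_negf[symmetric])
  finally show "A t j = (\<Sum>l\<in>{..<j}. (- c l / c j) * A t l)" .
qed

lemma pivotal_columns_independent:
  fixes A :: "nat \<Rightarrow> nat \<Rightarrow> 'a::field"
  assumes fin: "finite F" and piv: "\<And>l. l \<in> F \<Longrightarrow> pivotal m A l"
    and comb: "\<forall>t<m. (\<Sum>l\<in>F. e l * A t l) = 0"
  shows "\<forall>l\<in>F. e l = 0"
proof (rule ccontr)
  assume "\<not> (\<forall>l\<in>F. e l = 0)"
  then have ne: "{l\<in>F. e l \<noteq> 0} \<noteq> {}" by auto
  define M where "M = Max {l\<in>F. e l \<noteq> 0}"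
  have M: "M \<in> F" "e M \<noteq> 0"
    using Max_in[OF _ ne] fin unfolding M_def by auto
  have above_M: "e l = 0" if "l \<in> F" "M < l" for l
    using Max_ge[of "{l\<in>F. e l \<noteq> 0}" l] fin that unfolding M_def by fastforce
  define c where "c l = (if l \<in> F then e l else 0)" for l
  have "\<forall>t<m. (\<Sum>l<Suc M. c l * A t l) = 0"
  proof (intro allI impI)
    fix t assume "t < m"
    have "(\<Sum>l<Suc M. c l * A t l) = (\<Sum>l<Suc M. if l \<in> F then e l * A t l else 0)"
      by (rule sum.cong) (auto simp: c_def)
    also have "\<dots> = (\<Sum>l\<in>{l\<in>{..<Suc M}. l \<in> F}. e l * A t l)"
      by (rule sum.inter_filter[symmetric]) simp
    also have "\<dots> = (\<Sum>l\<in>F. e l * A t l)"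
      using fin above_M by (intro sum.mono_neutral_left) (auto simp: less_Suc_eq_le intro: leI)
    finally show "(\<Sum>l<Suc M. c l * A t l) = 0" using comb \<open>t < m\<close> by simp
  qed
  then have "in_col_span m A {..<M} M"
    by (rule in_col_span_if_dependent) (simp add: c_def M)
  with piv[OF M(1)] show False by (simp add: pivotal_def)
qed

lemma lincomb_in_span_of_pivots:
  fixes A :: "nat \<Rightarrow> nat \<Rightarrow> 'a::field"
  assumes "i \<le> N"
  shows "\<exists>c'. \<forall>t<m. (\<Sum>l<i. c l * A t l) = (\<Sum>l\<in>{l\<in>pivots m N A. l < i}. c' l * A t l)"
  using assms
proof (induction i arbitrary: c)
  case 0
  then show ?case by simp
next
  case (Suc i)
  show ?case
  proof (cases "pivotal m A i")
    case True
    obtain c' where c': "\<forall>t<m. (\<Sum>l<i. c l * A t l) = (\<Sum>l\<in>{l\<in>pivots m N A. l < i}. c' l * A t l)"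
      using Suc by force
    have piv_Suc: "{l\<in>pivots m N A. l < Suc i} = insert i {l\<in>pivots m N A. l < i}"
      using True Suc.prems by (auto simp: pivots_def)
    have fin: "finite {l\<in>pivots m N A. l < i}" by (rule finite_subset[of _ "{..<i}"]) auto
    show ?thesis
    proof (intro exI allI impI)
      fix t assume "t < m"
      have "(\<Sum>l\<in>{l\<in>pivots m N A. l < i}. c' l * A t l)
          = (\<Sum>l\<in>{l\<in>pivots m N A. l < i}. (c'(i := c i)) l * A t l)"
        by (rule sum.cong) auto
      then show "(\<Sum>l<Suc i. c l * A t l)
          = (\<Sum>l\<in>{l\<in>pivots m N A. l < Suc i}. (c'(i := c i)) l * A t l)"
        using c' \<open>t < m\<close> fin by (simp add: piv_Suc)
    qed
  next
    case False
    then obtain e where e: "\<forall>t<m. A t i = (\<Sum>l<i. e l * A t l)"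
      unfolding pivotal_def in_col_span_def by auto
    obtain c' where c': "\<forall>t<m. (\<Sum>l<i. (c l + c i * e l) * A t l)
        = (\<Sum>l\<in>{l\<in>pivots m N A. l < i}. c' l * A t l)"
      using Suc by force
    have "(\<Sum>l<Suc i. c l * A t l) = (\<Sum>l<i. (c l + c i * e l) * A t l)" if "t < m" for t
      using e that by (simp add: sum_distrib_left distrib_right sum.distrib mult.assoc)
    moreover have "{l\<in>pivots m N A. l < Suc i} = {l\<in>pivots m N A. l < i}"
      using False by (auto simp: pivots_def less_Suc_eq)
    ultimately show ?thesis using c' by auto
  qed
qed

lemma alpha_spec:
  fixes A :: "nat \<Rightarrow> nat \<Rightarrow> 'a::field"
  assumes "i < N" "\<not> pivotal m A i"
  shows "\<forall>r<m. A r i = (\<Sum>j\<in>{j \<in> pivots m N A. j < i}. alpha m N A i j * A r j)"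
proof -
  let ?F = "{j \<in> pivots m N A. j < i}"
  let ?P = "\<lambda>c. (\<forall>j. c j \<noteq> 0 \<longrightarrow> j \<in> pivots m N A \<and> j < i) \<and>
      (\<forall>r<m. A r i = (\<Sum>j\<in>?F. c j * A r j))"
  have fin: "finite ?F" by (rule finite_subset[of _ "{..<i}"]) auto
  obtain c where c: "\<forall>r<m. A r i = (\<Sum>l<i. c l * A r l)"
    using assms(2) unfolding pivotal_def in_col_span_def by auto
  obtain c' where c': "\<forall>t<m. (\<Sum>l<i. c l * A t l) = (\<Sum>l\<in>?F. c' l * A t l)"
    using lincomb_in_span_of_pivots[of i N m c A] assms(1) by auto
  have exists: "?P (\<lambda>j. if j \<in> ?F then c' j else 0)"
  proof (intro conjI allI impI)
    fix r assume "r < m"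
    then have "A r i = (\<Sum>j\<in>?F. c' j * A r j)" using c c' by simp
    also have "\<dots> = (\<Sum>j\<in>?F. (if j \<in> ?F then c' j else 0) * A r j)"
      by (rule sum.cong) simp_all
    finally show "A r i = (\<Sum>j\<in>?F. (if j \<in> ?F then c' j else 0) * A r j)" .
  qed (auto split: if_splits)
  have unique: "c1 = c2" if c1: "?P c1" and c2: "?P c2" for c1 c2
  proof -
    have "\<forall>t<m. (\<Sum>l\<in>?F. (c1 l - c2 l) * A t l) = 0"
    proof (intro allI impI)
      fix t assume "t < m"
      have "A t i = (\<Sum>l\<in>?F. c1 l * A t l)" "A t i = (\<Sum>l\<in>?F. c2 l * A t l)"
        using c1 c2 \<open>t < m\<close> by blast+
      then have "(\<Sum>l\<in>?F. c1 l * A t l) = (\<Sum>l\<in>?F. c2 l * A t l)" by simp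
      then show "(\<Sum>l\<in>?F. (c1 l - c2 l) * A t l) = 0"
        by (simp add: left_diff_distrib sum_subtractf)
    qed
    then have "\<forall>l\<in>?F. c1 l - c2 l = 0"
      by (rule pivotal_columns_independent[OF fin, rotated]) (simp add: pivots_def)
    then show "c1 = c2" using c1 c2 by (metis (no_types, lifting) eq_iff_diff_eq_0 mem_Collect_eq ext)
  qed
  have "?P (THE c. ?P c)"
    by (rule theI[where P = ?P, OF exists]) (rule unique[OF _ exists])
  then show ?thesis unfolding alpha_def by (rule conjunct2)
qed

lemma bvec_in_kernel:
  fixes A :: "nat \<Rightarrow> nat \<Rightarrow> 'a::field"
  assumes "i < N" "\<not> pivotal m A i" "t < m"
  shows "(\<Sum>j<N. A t j * bvec m N A i j) = 0"
proof -
  let ?F = "{j \<in> pivots m N A. j < i}"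
  have F: "?F \<subseteq> {..<N}" by (auto simp: pivots_def)
  have "(\<Sum>j<N. A t j * bvec m N A i j)
      = (\<Sum>j<N. (if j = i then A t j else 0) - (if j \<in> ?F then alpha m N A i j * A t j else 0))"
    by (rule sum.cong) (auto simp: bvec_def right_diff_distrib mult.commute)
  also have "\<dots> = (\<Sum>j<N. if j = i then A t j else 0) - (\<Sum>j<N. if j \<in> ?F then alpha m N A i j * A t j else 0)"
    by (rule sum_subtractf)
  also have "\<dots> = A t i - (\<Sum>j\<in>?F. alpha m N A i j * A t j)"
    using assms(1) F by (simp add: sum.If_cases Int_absorb1 Int_commute)
  also have "\<dots> = 0" using alpha_spec[OF assms(1,2)] assms(3) by simp
  finally show ?thesis .
qed

lemma basic_nonpivot_below:
  assumes "j \<in> nonpivots m N A"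
  shows "\<exists>i\<in>basic_nonpivots n m N A. i mod n = j mod n \<and> i \<le> j"
proof -
  define i where "i = (LEAST i. i \<in> nonpivots m N A \<and> i mod n = j mod n)"
  have i: "i \<in> nonpivots m N A" "i mod n = j mod n"
    unfolding i_def by (rule LeastI2[of _ j], simp add: assms, simp)+
  have least: "i \<le> i'" if "i' \<in> nonpivots m N A" "i' mod n = j mod n" for i'
    unfolding i_def using that by (intro Least_le) simp
  have "i \<in> basic_nonpivots n m N A"
    unfolding basic_nonpivots_def using i least by auto
  then show ?thesis using i least[OF assms refl] by auto
qed

lemma basic_nonpivotsD:
  assumes "i \<in> basic_nonpivots n m N A"
  shows "i < N" "\<not> pivotal m A i"
  using assms by (simp_all add: basic_nonpivots_def nonpivots_def)

lemma inj_on_mod_basic_nonpivots: "inj_on (\<lambda>i. i mod n) (basic_nonpivots n m N A)"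
  by (rule inj_onI) (auto simp: basic_nonpivots_def intro: le_antisym)

lemma finite_basic_nonpivots [simp]: "finite (basic_nonpivots n m N A)"
  by (rule finite_subset[of _ "{..<N}"]) (auto simp: basic_nonpivots_def nonpivots_def)

section \<open>Last non-zero entries\<close>

definition last_nonzero :: "(nat \<Rightarrow> 'a::zero) \<Rightarrow> nat \<Rightarrow> bool" where
  "last_nonzero f I \<longleftrightarrow> f I \<noteq> 0 \<and> (\<forall>j>I. f j = 0)"

lemma last_nonzero_unique: "last_nonzero f I \<Longrightarrow> last_nonzero f J \<Longrightarrow> I = J"
  unfolding last_nonzero_def by (metis linorder_neqE_nat)

lemma last_nonzero_exists:
  assumes "finite {j. f j \<noteq> 0}" "f j \<noteq> 0"
  shows "\<exists>I. last_nonzero f I"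
proof -
  have "{j. f j \<noteq> 0} \<noteq> {}" using assms(2) by auto
  then have "last_nonzero f (Max {j. f j \<noteq> 0})"
    using Max_in[OF assms(1)] Max_ge[OF assms(1)] unfolding last_nonzero_def
    by (auto simp: not_le[symmetric])
  then show ?thesis ..
qed

lemma last_nonzero_mult:
  fixes f :: "nat \<Rightarrow> 'a::semiring_no_zero_divisors"
  shows "c \<noteq> 0 \<Longrightarrow> last_nonzero f I \<Longrightarrow> last_nonzero (\<lambda>j. c * f j) I"
  by (simp add: last_nonzero_def)

lemma last_nonzero_sum:
  fixes w :: "'b \<Rightarrow> nat \<Rightarrow> 'a::comm_monoid_add"
  assumes "finite Z" "Z \<noteq> {}" "inj_on p Z" and w: "\<And>x. x \<in> Z \<Longrightarrow> last_nonzero (w x) (p x)"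
  shows "last_nonzero (\<lambda>j. \<Sum>x\<in>Z. w x j) (Max (p ` Z))"
proof -
  have "Max (p ` Z) \<in> p ` Z" using assms(1,2) by (intro Max_in) auto
  then obtain x0 where x0: "x0 \<in> Z" "p x0 = Max (p ` Z)" by (auto simp: eq_commute)
  have below: "p x < p x0" if "x \<in> Z" "x \<noteq> x0" for x
  proof -
    have "p x \<le> p x0" using assms(1) that(1) x0(2) by simp
    moreover have "p x \<noteq> p x0" using inj_onD[OF assms(3) _ that(1) x0(1)] that(2) by blast
    ultimately show ?thesis by simp
  qed
  have "(\<Sum>x\<in>Z. w x (p x0)) = (\<Sum>x\<in>Z. if x = x0 then w x0 (p x0) else 0)"
    using below w unfolding last_nonzero_def by (intro sum.cong) auto
  also have "\<dots> = w x0 (p x0)" using assms(1) x0(1) by simp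
  finally have "(\<Sum>x\<in>Z. w x (p x0)) = w x0 (p x0)" .
  moreover have "(\<Sum>x\<in>Z. w x j) = 0" if "p x0 < j" for j
  proof (rule sum.neutral, intro ballI)
    fix x assume "x \<in> Z"
    then have "p x < j" using below[of x] that by (cases "x = x0") auto
    then show "w x j = 0" using w[OF \<open>x \<in> Z\<close>] by (simp add: last_nonzero_def)
  qed
  ultimately show ?thesis
    using w[OF x0(1)] x0(2) unfolding last_nonzero_def by auto
qed

section \<open>Coefficient vectors of polynomial vectors\<close>

text \<open>The index order is the term-over-position order, so the last non-zero index \<open>I\<close> of a
  non-zero \<open>h\<close> encodes both \<open>deg h = I div n\<close> and the entry \<open>I mod n\<close> of the leading vector.\<close>

definition vec_coeff :: "nat \<Rightarrow> (nat \<Rightarrow> 'a::zero poly) \<Rightarrow> nat \<Rightarrow> 'a" where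
  "vec_coeff n h j = coeff (h (j mod n)) (j div n)"

lemma vec_coeff_block [simp]: "r < n \<Longrightarrow> vec_coeff n h (k * n + r) = coeff (h r) k"
  by (simp add: vec_coeff_def)

lemma finite_vec_coeff_support:
  assumes "n > 0"
  shows "finite {j. vec_coeff n h j \<noteq> 0}"
proof (rule finite_subset)
  define D where "D = Max ((\<lambda>r. degree (h r)) ` {..<n})"
  show "{j. vec_coeff n h j \<noteq> 0} \<subseteq> {..<n * Suc D}"
  proof
    fix j assume "j \<in> {j. vec_coeff n h j \<noteq> 0}"
    then have "j div n \<le> degree (h (j mod n))"
      by (simp add: vec_coeff_def le_degree)
    also have "\<dots> \<le> D" unfolding D_def using assms by (intro Max_ge) auto
    finally show "j \<in> {..<n * Suc D}"
      using assms by (simp add: div_less_iff_less_mult mult.commute flip: less_Suc_eq_le)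
  qed
qed simp

lemma degree_le_last_nonzero:
  assumes "n > 0" "last_nonzero (vec_coeff n h) I" "r < n"
  shows "degree (h r) \<le> I div n"
proof (rule degree_le, intro allI impI)
  fix k assume "I div n < k"
  then have "I < k * n + r"
    using assms(1) by (metis div_less_iff_less_mult less_le_trans mult.commute le_add1)
  then show "coeff (h r) k = 0"
    using assms(2,3) unfolding last_nonzero_def by (metis vec_coeff_block)
qed

lemma pvdeg_eq_last_nonzero:
  assumes "n > 0" "last_nonzero (vec_coeff n h) I"
  shows "pvdeg n h = I div n"
proof (rule antisym)
  show "pvdeg n h \<le> I div n"
    unfolding pvdeg_def using assms degree_le_last_nonzero by (intro Max.boundedI) auto
  have "I div n \<le> degree (h (I mod n))"
    using assms(2) by (simp add: last_nonzero_def vec_coeff_def le_degree)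
  also have "\<dots> \<le> pvdeg n h"
    unfolding pvdeg_def using assms(1) by (intro Max_ge) auto
  finally show "I div n \<le> pvdeg n h" .
qed

lemma last_nonzero_LV:
  assumes "n > 0" "last_nonzero (vec_coeff n h) I"
  shows "last_nonzero (LV n h) (I mod n)"
proof -
  have LV_eq: "LV n h r = vec_coeff n h (I div n * n + r)" if "r < n" for r
    using assms that by (simp add: LV_def pvdeg_eq_last_nonzero)
  show ?thesis
    unfolding last_nonzero_def
  proof (intro conjI allI impI)
    show "LV n h (I mod n) \<noteq> 0"
      using assms LV_eq[of "I mod n"] by (simp add: last_nonzero_def)
    fix r assume "I mod n < r"
    show "LV n h r = 0"
    proof (cases "r < n")
      case True
      have "I < I div n * n + r" using \<open>I mod n < r\<close> div_mult_mod_eq[of I n] by linarith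
      then have "vec_coeff n h (I div n * n + r) = 0"
        using assms(2) unfolding last_nonzero_def by blast
      with LV_eq[OF True] show ?thesis by simp
    qed (simp add: LV_def)
  qed
qed

lemma coeff_mult_at_degree_bounds:
  fixes p q :: "'a::comm_semiring_1 poly"
  assumes "degree p \<le> d" "degree q \<le> k"
  shows "coeff (p * q) (d + k) = coeff p d * coeff q k"
proof -
  have "coeff (p * q) (d + k) = (\<Sum>i\<le>d + k. coeff p i * coeff q (d + k - i))"
    by (rule coeff_mult)
  also have "\<dots> = (\<Sum>i\<le>d + k. if i = d then coeff p d * coeff q k else 0)"
  proof (rule sum.cong)
    fix i assume "i \<in> {..d + k}"
    show "coeff p i * coeff q (d + k - i) = (if i = d then coeff p d * coeff q k else 0)"
      using assms by (cases i d rule: linorder_cases) (auto simp: coeff_eq_0)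
  qed simp
  finally show ?thesis by simp
qed

lemma last_nonzero_vec_coeff_mult:
  fixes p :: "'a::idom poly"
  assumes n: "n > 0" and "p \<noteq> 0" and h: "last_nonzero (vec_coeff n h) I"
  defines "J \<equiv> degree p * n + I"
  shows "vec_coeff n (\<lambda>r. p * h r) J = lead_coeff p * vec_coeff n h I"
    and "last_nonzero (vec_coeff n (\<lambda>r. p * h r)) J"
proof -
  define D where "D = I div n"
  have J: "J = (degree p + D) * n + I mod n"
    by (simp add: J_def D_def distrib_right)
  have top: "coeff (p * h r) (degree p + D) = lead_coeff p * vec_coeff n h (D * n + r)" if "r < n" for r
    using coeff_mult_at_degree_bounds[OF order.refl degree_le_last_nonzero[OF n h that]] that
    by (simp add: D_def)
  show val: "vec_coeff n (\<lambda>r. p * h r) J = lead_coeff p * vec_coeff n h I"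
    using n top[of "I mod n"] by (simp add: J D_def)
  show "last_nonzero (vec_coeff n (\<lambda>r. p * h r)) J"
    unfolding last_nonzero_def
  proof (intro conjI allI impI)
    show "vec_coeff n (\<lambda>r. p * h r) J \<noteq> 0"
      using val \<open>p \<noteq> 0\<close> h by (simp add: last_nonzero_def)
    fix j assume "J < j"
    define k r where "k = j div n" and "r = j mod n"
    have j: "j = k * n + r" "r < n" using n by (simp_all add: k_def r_def)
    have "degree p + D \<le> k"
      using div_le_mono[of J j n] \<open>J < j\<close> n by (simp add: J k_def)
    then consider "degree p + D < k" | "k = degree p + D" "I mod n < r"
      using \<open>J < j\<close> J j by fastforce
    then show "vec_coeff n (\<lambda>r. p * h r) j = 0"
    proof cases
      case 1
      have "degree (p * h r) \<le> degree p + D"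
        using degree_mult_le[of p "h r"] degree_le_last_nonzero[OF n h j(2)] by (simp add: D_def)
      with 1 show ?thesis by (simp add: j coeff_eq_0)
    next
      case 2
      then have "I < D * n + r" using div_mult_mod_eq[of I n] unfolding D_def by linarith
      with h have "vec_coeff n h (D * n + r) = 0" by (simp add: last_nonzero_def)
      with 2 top[OF j(2)] show ?thesis by (simp add: j)
    qed
  qed
qed

lemma sum_lessThan_mult_blocks:
  fixes f :: "nat \<Rightarrow> 'b::comm_monoid_add"
  shows "(\<Sum>j<n * D. f j) = (\<Sum>k<D. \<Sum>r<n. f (k * n + r))"
proof -
  have "(\<Sum>j<n * D. f j) = (\<Sum>k<D. sum f {k * n..<k * n + n})"
    by (simp add: sum.nat_group mult.commute)
  also have "\<dots> = (\<Sum>k<D. \<Sum>r<n. f (k * n + r))"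
  proof (rule sum.cong[OF refl])
    fix k
    show "sum f {k * n..<k * n + n} = (\<Sum>r<n. f (k * n + r))"
      by (rule sum.reindex_bij_witness[where i="\<lambda>r. k * n + r" and j="\<lambda>j. j - k * n"]) auto
  qed
  finally show ?thesis .
qed

section \<open>The syzygies \<open>b\<^sub>i\<^sup>\<flat>\<close>\<close>

lemma syz_diff_mult:
  assumes "h \<in> syz n a" "g \<in> syz n a"
  shows "(\<lambda>r. h r - m * g r) \<in> syz n a"
proof -
  have "(\<Sum>r<n. a r * (h r - m * g r)) = (\<Sum>r<n. a r * h r) - m * (\<Sum>r<n. a r * g r)"
    by (simp add: right_diff_distrib sum_subtractf sum_distrib_left mult.left_commute)
  with assms show ?thesis by (simp add: syz_def polyvec_def)
qed

locale mu_basis_setting =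
  fixes a :: "nat \<Rightarrow> 'a::field poly" and n d :: nat
  assumes n_pos: "n > 0" and polyvec_a: "polyvec n a" and a_nonzero: "\<exists>r<n. a r \<noteq> 0"
    and d_eq: "d = pvdeg n a"
begin

abbreviation rows :: nat where "rows \<equiv> 2 * d + 1"
abbreviation cols :: nat where "cols \<equiv> n * (d + 1)"
abbreviation A :: "nat \<Rightarrow> nat \<Rightarrow> 'a" where "A \<equiv> coeff_mat n a"
abbreviation b :: "nat \<Rightarrow> nat \<Rightarrow> 'a poly" where "b i \<equiv> flat n d (bvec rows cols A i)"
abbreviation q :: "nat set" where "q \<equiv> basic_nonpivots n rows cols A"

lemma degree_a_le: "degree (a r) \<le> d"
proof (cases "r < n")
  case True
  then show ?thesis unfolding d_eq pvdeg_def by (intro Max_ge) auto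
qed (use polyvec_a in \<open>simp add: polyvec_def\<close>)

lemma less_cols_iff: "j < cols \<longleftrightarrow> j div n \<le> d"
  using n_pos by (simp add: div_less_iff_less_mult mult.commute flip: less_Suc_eq_le)

lemma coeff_inner_eq_row:
  assumes deg: "\<And>r. r < n \<Longrightarrow> degree (h r) \<le> d"
  shows "coeff (\<Sum>r<n. a r * h r) t = (\<Sum>j<cols. A t j * vec_coeff n h j)"
proof -
  have "(\<Sum>j<cols. A t j * vec_coeff n h j)
      = (\<Sum>k<d + 1. \<Sum>r<n. A t (k * n + r) * vec_coeff n h (k * n + r))"
    by (rule sum_lessThan_mult_blocks)
  also have "\<dots> = (\<Sum>k<d + 1. \<Sum>r<n. if k \<le> t then coeff (a r) (t - k) * coeff (h r) k else 0)"
    by (intro sum.cong refl) (auto simp: coeff_mat_def Let_def)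
  also have "\<dots> = (\<Sum>r<n. \<Sum>k<d + 1. if k \<le> t then coeff (a r) (t - k) * coeff (h r) k else 0)"
    by (rule sum.swap)
  also have "\<dots> = (\<Sum>r<n. coeff (a r * h r) t)"
  proof (rule sum.cong[OF refl])
    fix r assume "r \<in> {..<n}"
    have "coeff (a r * h r) t = (\<Sum>k\<le>t. coeff (h r) k * coeff (a r) (t - k))"
      by (simp add: coeff_mult mult.commute[of "a r"])
    also have "\<dots> = (\<Sum>k\<in>{..t} \<inter> {..<d + 1}. coeff (h r) k * coeff (a r) (t - k))"
      using deg[of r] \<open>r \<in> {..<n}\<close>
      by (intro sum.mono_neutral_right) (auto simp: coeff_eq_0 dest!: le_degree)
    also have "\<dots> = (\<Sum>k\<in>{k\<in>{..<d + 1}. k \<le> t}. coeff (a r) (t - k) * coeff (h r) k)"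
      by (intro sum.cong) (auto simp: mult.commute)
    also have "\<dots> = (\<Sum>k<d + 1. if k \<le> t then coeff (a r) (t - k) * coeff (h r) k else 0)"
      by (rule sum.inter_filter) simp
    finally show "(\<Sum>k<d + 1. if k \<le> t then coeff (a r) (t - k) * coeff (h r) k else 0)
        = coeff (a r * h r) t" ..
  qed
  finally show ?thesis by (simp add: coeff_sum)
qed

lemma syz_iff_kernel:
  assumes "polyvec n h" and deg: "\<And>r. r < n \<Longrightarrow> degree (h r) \<le> d"
  shows "h \<in> syz n a \<longleftrightarrow> (\<forall>t<rows. (\<Sum>j<cols. A t j * vec_coeff n h j) = 0)"
proof -
  define p where "p = (\<Sum>r<n. a r * h r)"
  have "degree (a r * h r) \<le> d + d" if "r < n" for r
    using degree_mult_le[of "a r" "h r"] degree_a_le[of r] deg[OF that] by linarith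
  then have "degree p \<le> d + d"
    unfolding p_def by (intro degree_sum_le) auto
  then have "p = 0 \<longleftrightarrow> (\<forall>t<rows. coeff p t = 0)"
    by (auto intro!: poly_eqI) (metis coeff_eq_0 le_less_trans not_less_eq add_2_eq_Suc' mult_2)
  then show ?thesis
    unfolding p_def
    using assms by (simp add: syz_def coeff_inner_eq_row)
qed

lemma vec_coeff_flat: "vec_coeff n (flat n d v) j = (if j < cols then v j else 0)"
proof -
  have "j mod n < n" using n_pos by simp
  then show ?thesis
    using less_cols_iff[of j] by (simp add: vec_coeff_def flat_def coeff_sum coeff_monom)
qed

lemma polyvec_flat: "polyvec n (flat n d v)"
  by (simp add: polyvec_def flat_def)

lemma degree_flat_le: "degree (flat n d v r) \<le> d"
  unfolding flat_def by (auto intro!: degree_sum_le order.trans[OF degree_monom_le])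

lemma b_in_syz:
  assumes "i < cols" "\<not> pivotal rows A i"
  shows "b i \<in> syz n a"
  using bvec_in_kernel[OF assms]
  by (simp add: syz_iff_kernel polyvec_flat degree_flat_le vec_coeff_flat)

lemma vec_coeff_b_self: "i < cols \<Longrightarrow> vec_coeff n (b i) i = 1"
  by (simp add: vec_coeff_flat bvec_def)

lemma last_nonzero_b: "i < cols \<Longrightarrow> last_nonzero (vec_coeff n (b i)) i"
  by (auto simp: last_nonzero_def vec_coeff_flat bvec_def)

lemma nonpivotal_iff_syzygy:
  assumes "j < cols"
  shows "\<not> pivotal rows A j \<longleftrightarrow> (\<exists>h\<in>syz n a. last_nonzero (vec_coeff n h) j)"
proof
  assume "\<not> pivotal rows A j"
  then show "\<exists>h\<in>syz n a. last_nonzero (vec_coeff n h) j"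
    using b_in_syz last_nonzero_b assms by blast
next
  assume "\<exists>h\<in>syz n a. last_nonzero (vec_coeff n h) j"
  then obtain h where h: "h \<in> syz n a" "last_nonzero (vec_coeff n h) j" by blast
  have "degree (h r) \<le> d" if "r < n" for r
    using degree_le_last_nonzero[OF n_pos h(2) that] assms less_cols_iff by simp
  then have kernel: "\<forall>t<rows. (\<Sum>l<cols. A t l * vec_coeff n h l) = 0"
    using h(1) syz_iff_kernel by (auto simp: syz_def)
  have "\<forall>t<rows. (\<Sum>l<Suc j. vec_coeff n h l * A t l) = 0"
  proof (intro allI impI)
    fix t assume "t < rows"
    have "(\<Sum>l<Suc j. vec_coeff n h l * A t l) = (\<Sum>l<cols. A t l * vec_coeff n h l)"
      using assms h(2) by (intro sum.mono_neutral_cong_left) (auto simp: last_nonzero_def)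
    with kernel \<open>t < rows\<close> show "(\<Sum>l<Suc j. vec_coeff n h l * A t l) = 0" by simp
  qed
  then have "in_col_span rows A {..<j} j"
    by (rule in_col_span_if_dependent) (use h(2) in \<open>simp add: last_nonzero_def\<close>)
  then show "\<not> pivotal rows A j" by (simp add: pivotal_def)
qed

text \<open>This is the \<open>r\<^sub>0\<close> of the proof idea: the unique residue not in \<open>q mod n\<close>.\<close>

definition free_residue :: nat where
  "free_residue = (LEAST r. coeff (a r) d \<noteq> 0)"

lemma free_residue:
  shows "free_residue < n" "coeff (a free_residue) d \<noteq> 0"
    and "r < free_residue \<Longrightarrow> coeff (a r) d = 0"
proof -
  obtain s where "s < n" "a s \<noteq> 0" using a_nonzero by blast
  then have "vec_coeff n a (degree (a s) * n + s) \<noteq> 0" by simp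
  then obtain I where I: "last_nonzero (vec_coeff n a) I"
    using last_nonzero_exists[OF finite_vec_coeff_support[OF n_pos]] by blast
  then have "coeff (a (I mod n)) d \<noteq> 0"
    using pvdeg_eq_last_nonzero[OF n_pos I] by (simp add: d_eq last_nonzero_def vec_coeff_def)
  then show "coeff (a free_residue) d \<noteq> 0"
    unfolding free_residue_def by (rule LeastI)
  then show "free_residue < n"
    using polyvec_a by (metis coeff_0 not_le polyvec_def)
  show "r < free_residue \<Longrightarrow> coeff (a r) d = 0"
    unfolding free_residue_def using not_less_Least[of r "\<lambda>r. coeff (a r) d \<noteq> 0"] by blast
qed

lemma leading_residue_ne_free_residue:
  assumes "h \<in> syz n a" and h: "last_nonzero (vec_coeff n h) I"
  shows "I mod n \<noteq> free_residue"
proof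
  assume res: "I mod n = free_residue"
  define D where "D = I div n"
  have I: "I = D * n + free_residue" using res div_mult_mod_eq[of I n] by (simp add: D_def)
  have "0 = coeff (\<Sum>r<n. a r * h r) (d + D)"
    using assms(1) by (simp add: syz_def)
  also have "\<dots> = (\<Sum>r<n. coeff (a r) d * vec_coeff n h (D * n + r))"
    unfolding coeff_sum D_def
    by (intro sum.cong refl) (simp add: coeff_mult_at_degree_bounds degree_a_le
        degree_le_last_nonzero[OF n_pos h])
  also have "\<dots> = (\<Sum>r<n. if r = free_residue then coeff (a free_residue) d * vec_coeff n h I else 0)"
  proof (rule sum.cong[OF refl])
    fix r assume "r \<in> {..<n}"
    consider "r < free_residue" | "r = free_residue" | "free_residue < r" by linarith
    then show "coeff (a r) d * vec_coeff n h (D * n + r)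
        = (if r = free_residue then coeff (a free_residue) d * vec_coeff n h I else 0)"
    proof cases
      case 3
      then have "vec_coeff n h (D * n + r) = 0" using h I by (simp add: last_nonzero_def)
      with 3 show ?thesis by simp
    qed (simp_all add: free_residue I)
  qed
  also have "\<dots> = coeff (a free_residue) d * vec_coeff n h I"
    using free_residue(1) by simp
  finally show False
    using free_residue(2) h by (simp add: last_nonzero_def)
qed

lemma koszul_syzygy:
  assumes "r < n" "r \<noteq> free_residue"
  shows "\<exists>h\<in>syz n a. \<exists>I<cols. last_nonzero (vec_coeff n h) I \<and> I mod n = r"
proof -
  define r0 where "r0 = free_residue"
  define h where "h s = (if s = r then a r0 else if s = r0 then - a r else 0)" for s
  have r0: "r0 < n" "r \<noteq> r0" "a r0 \<noteq> 0"
    using free_residue(1,2) assms(2) by (auto simp: r0_def)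
  have "(\<Sum>s<n. a s * h s) = (\<Sum>s<n. (if s = r then a r * a r0 else 0) + (if s = r0 then - (a r0 * a r) else 0))"
    by (intro sum.cong refl) (auto simp: h_def r0(2))
  also have "\<dots> = 0"
    using assms(1) r0(1) by (simp add: sum.distrib mult.commute)
  finally have syz: "h \<in> syz n a"
    using assms(1) r0(1) by (simp add: syz_def polyvec_def h_def)
  have "vec_coeff n h (degree (a r0) * n + r) \<noteq> 0"
    using assms(1) r0(3) by (simp add: h_def)
  then obtain I where I: "last_nonzero (vec_coeff n h) I"
    using last_nonzero_exists[OF finite_vec_coeff_support[OF n_pos]] by blast
  then have "coeff (h (I mod n)) (I div n) \<noteq> 0"
    by (simp add: last_nonzero_def vec_coeff_def)
  moreover have "I mod n \<noteq> r0"
    using leading_residue_ne_free_residue[OF syz I] by (simp add: r0_def)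
  ultimately have "I mod n = r" "I div n \<le> degree (a r0)"
    by (auto simp: h_def le_degree split: if_splits)
  then have "I < cols"
    using degree_a_le[of r0] less_cols_iff by simp
  with syz I \<open>I mod n = r\<close> show ?thesis by blast
qed

lemma basic_nonpivot_residues: "(\<lambda>i. i mod n) ` q = {..<n} - {free_residue}"
proof
  show "(\<lambda>i. i mod n) ` q \<subseteq> {..<n} - {free_residue}"
  proof (rule image_subsetI)
    fix i assume "i \<in> q"
    then obtain h where "h \<in> syz n a" "last_nonzero (vec_coeff n h) i"
      using nonpivotal_iff_syzygy basic_nonpivotsD by blast
    then show "i mod n \<in> {..<n} - {free_residue}"
      using n_pos leading_residue_ne_free_residue by auto
  qed
  show "{..<n} - {free_residue} \<subseteq> (\<lambda>i. i mod n) ` q"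
  proof (rule subsetI)
    fix r assume "r \<in> {..<n} - {free_residue}"
    then have "r < n" "r \<noteq> free_residue" by auto
    then obtain h I where "h \<in> syz n a" "I < cols" "last_nonzero (vec_coeff n h) I" "I mod n = r"
      using koszul_syzygy by blast
    then have "I \<in> nonpivots rows cols A"
      using nonpivotal_iff_syzygy by (auto simp: nonpivots_def)
    then obtain i where "i \<in> q" "i mod n = r"
      using basic_nonpivot_below \<open>I mod n = r\<close> by blast
    then show "r \<in> (\<lambda>i. i mod n) ` q" by blast
  qed
qed

lemma card_basic_nonpivots: "card q = n - 1"
proof -
  have "card q = card ((\<lambda>i. i mod n) ` q)"
    by (rule card_image[OF inj_on_mod_basic_nonpivots, symmetric])
  also have "\<dots> = n - 1"
    by (subst basic_nonpivot_residues) (use free_residue(1) in simp)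
  finally show ?thesis .
qed

lemma basic_nonpivot_below_syzygy:
  assumes "h \<in> syz n a" "last_nonzero (vec_coeff n h) I"
  shows "\<exists>i\<in>q. i mod n = I mod n \<and> i \<le> I"
proof (cases "I < cols")
  case True
  then have "I \<in> nonpivots rows cols A"
    using assms nonpivotal_iff_syzygy by (auto simp: nonpivots_def)
  then show ?thesis by (rule basic_nonpivot_below)
next
  case False
  have "I mod n \<in> {..<n} - {free_residue}"
    using n_pos leading_residue_ne_free_residue[OF assms] by simp
  then obtain i where "i \<in> q" "i mod n = I mod n"
    unfolding basic_nonpivot_residues[symmetric] by auto
  moreover have "i < cols" using basic_nonpivotsD(1)[OF \<open>i \<in> q\<close>] .
  ultimately show ?thesis using False by (intro bexI[of _ i]) auto
qed

lemma inj_on_b: "inj_on b q"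
  by (rule inj_onI) (metis last_nonzero_unique last_nonzero_b basic_nonpivotsD(1))

lemma syzygy_reduction_step:
  assumes h: "h \<in> syz n a" "last_nonzero (vec_coeff n h) I"
  obtains i m where "i \<in> q" "(\<lambda>r. h r - m * b i r) \<in> syz n a"
    "\<forall>j\<ge>I. vec_coeff n (\<lambda>r. h r - m * b i r) j = 0"
proof -
  obtain i where i: "i \<in> q" "i mod n = I mod n" "i \<le> I"
    using basic_nonpivot_below_syzygy[OF h] by blast
  have "i < cols" using basic_nonpivotsD(1)[OF i(1)] .
  define m where "m = monom (vec_coeff n h I) (I div n - i div n)"
  have m: "m \<noteq> 0" "lead_coeff m = vec_coeff n h I"
    using h(2) by (simp_all add: m_def last_nonzero_def degree_monom_eq)
  have "i div n * n \<le> I div n * n" using div_le_mono[OF i(3)] by simp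
  moreover have "degree m * n = I div n * n - i div n * n"
    using m(1) by (simp add: m_def degree_monom_eq diff_mult_distrib)
  ultimately have I: "degree m * n + i = I"
    using i(2) div_mult_mod_eq[of I n] div_mult_mod_eq[of i n] by linarith
  note mult_b = last_nonzero_vec_coeff_mult[OF n_pos m(1) last_nonzero_b[OF \<open>i < cols\<close>], unfolded I]
  have "vec_coeff n (\<lambda>r. h r - m * b i r) j = vec_coeff n h j - vec_coeff n (\<lambda>r. m * b i r) j" for j
    by (simp add: vec_coeff_def)
  then have "\<forall>j\<ge>I. vec_coeff n (\<lambda>r. h r - m * b i r) j = 0"
    using h(2) mult_b m(2) vec_coeff_b_self[OF \<open>i < cols\<close>]
    by (auto simp: last_nonzero_def le_less)
  moreover have "(\<lambda>r. h r - m * b i r) \<in> syz n a"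
    using syz_diff_mult h(1) b_in_syz \<open>i < cols\<close> basic_nonpivotsD(2)[OF i(1)] by blast
  ultimately show ?thesis using i(1) that by blast
qed

lemma syz_in_span_b_below:
  assumes "h \<in> syz n a" "\<forall>j\<ge>I. vec_coeff n h j = 0"
  shows "\<exists>f. h = (\<lambda>r. \<Sum>g\<in>b ` q. f g * g r)"
  using assms
proof (induction I arbitrary: h)
  case 0
  have "h r = 0" for r
  proof (cases "r < n")
    case True
    then show ?thesis using "0.prems"(2) vec_coeff_block[OF True, of h] by (intro poly_eqI) simp
  qed (use "0.prems"(1) in \<open>simp add: syz_def polyvec_def\<close>)
  then show ?case by (intro exI[of _ "\<lambda>_. 0"]) auto
next
  case (Suc I)
  show ?case
  proof (cases "vec_coeff n h I = 0")
    case True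
    with Suc.prems(2) have "\<forall>j\<ge>I. vec_coeff n h j = 0"
      by (metis Suc_leI le_neq_implies_less)
    with Suc.prems(1) show ?thesis by (rule Suc.IH)
  next
    case False
    with Suc.prems(2) have "last_nonzero (vec_coeff n h) I"
      by (auto simp: last_nonzero_def Suc_le_eq)
    then obtain i m where i: "i \<in> q" "(\<lambda>r. h r - m * b i r) \<in> syz n a"
        "\<forall>j\<ge>I. vec_coeff n (\<lambda>r. h r - m * b i r) j = 0"
      using syzygy_reduction_step Suc.prems(1) by blast
    then obtain f where f: "(\<lambda>r. h r - m * b i r) = (\<lambda>r. \<Sum>g\<in>b ` q. f g * g r)"
      using Suc.IH by blast
    have "h r = (\<Sum>g\<in>b ` q. (f(b i := f (b i) + m)) g * g r)" for r
    proof -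
      have "(\<Sum>g\<in>b ` q. (f(b i := f (b i) + m)) g * g r)
          = (\<Sum>g\<in>b ` q. f g * g r + (if g = b i then m * b i r else 0))"
        by (intro sum.cong refl) (simp add: distrib_right)
      also have "\<dots> = (h r - m * b i r) + m * b i r"
        using fun_cong[OF f, of r] i(1) by (simp add: sum.distrib)
      finally show ?thesis by simp
    qed
    then show ?thesis by blast
  qed
qed

lemma syz_in_span_b:
  assumes "h \<in> syz n a"
  shows "\<exists>f. h = (\<lambda>r. \<Sum>g\<in>b ` q. f g * g r)"
proof -
  obtain K where "\<forall>j\<in>{j. vec_coeff n h j \<noteq> 0}. j < K"
    using finite_vec_coeff_support[OF n_pos] finite_nat_set_iff_bounded by blast
  then have "\<forall>j\<ge>K. vec_coeff n h j = 0" by force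
  with assms show ?thesis by (rule syz_in_span_b_below)
qed

lemma b_free:
  assumes "(\<lambda>r. \<Sum>g\<in>b ` q. f g * g r) = (\<lambda>r. 0)"
  shows "\<forall>g\<in>b ` q. f g = 0"
proof (rule ccontr)
  define Z where "Z = {i \<in> q. f (b i) \<noteq> 0}"
  define J where "J i = degree (f (b i)) * n + i" for i
  assume nonzero: "\<not> (\<forall>g\<in>b ` q. f g = 0)"
  have "finite Z" by (simp add: Z_def)
  moreover from nonzero have "Z \<noteq> {}" by (auto simp: Z_def)
  moreover have "inj_on J Z"
  proof (rule inj_onI)
    fix i i' assume "i \<in> Z" "i' \<in> Z" "J i = J i'"
    then have "i mod n = i' mod n" by (metis J_def mod_mult_self3)
    with \<open>i \<in> Z\<close> \<open>i' \<in> Z\<close> show "i = i'"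
      using inj_onD[OF inj_on_mod_basic_nonpivots[of n rows cols A]] by (auto simp: Z_def)
  qed
  moreover have "last_nonzero (vec_coeff n (\<lambda>r. f (b i) * b i r)) (J i)" if "i \<in> Z" for i
  proof -
    have "i < cols" "f (b i) \<noteq> 0" using that basic_nonpivotsD(1) by (auto simp: Z_def)
    then show ?thesis
      unfolding J_def by (intro last_nonzero_vec_coeff_mult(2) n_pos last_nonzero_b)
  qed
  ultimately have "last_nonzero (\<lambda>j. \<Sum>i\<in>Z. vec_coeff n (\<lambda>r. f (b i) * b i r) j) (Max (J ` Z))"
    by (rule last_nonzero_sum)
  moreover have "(\<Sum>i\<in>Z. vec_coeff n (\<lambda>r. f (b i) * b i r) j) = 0" for j
  proof -
    have "(\<Sum>i\<in>Z. vec_coeff n (\<lambda>r. f (b i) * b i r) j) = vec_coeff n (\<lambda>r. \<Sum>i\<in>q. f (b i) * b i r) j"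
      unfolding Z_def vec_coeff_def coeff_sum
      by (intro sum.mono_neutral_left) auto
    also have "\<dots> = vec_coeff n (\<lambda>r. \<Sum>g\<in>b ` q. f g * g r) j"
      by (simp only: sum.reindex[OF inj_on_b] comp_def)
    finally show ?thesis using fun_cong[OF assms, of "j mod n"] by (simp add: vec_coeff_def)
  qed
  ultimately show False by (simp add: last_nonzero_def)
qed

lemma LV_b_independent:
  assumes "\<forall>r. (\<Sum>g\<in>b ` q. c g * LV n g r) = 0"
  shows "\<forall>g\<in>b ` q. c g = 0"
proof (rule ccontr)
  define Z where "Z = {i \<in> q. c (b i) \<noteq> 0}"
  assume nonzero: "\<not> (\<forall>g\<in>b ` q. c g = 0)"
  have "finite Z" by (simp add: Z_def)
  moreover from nonzero have "Z \<noteq> {}" by (auto simp: Z_def)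
  moreover have "inj_on (\<lambda>i. i mod n) Z"
    using inj_on_mod_basic_nonpivots[of n rows cols A] by (rule inj_on_subset) (auto simp: Z_def)
  moreover have "last_nonzero (\<lambda>r. c (b i) * LV n (b i) r) (i mod n)" if "i \<in> Z" for i
  proof -
    have "i < cols" "c (b i) \<noteq> 0" using that basic_nonpivotsD(1) by (auto simp: Z_def)
    then show ?thesis by (intro last_nonzero_mult last_nonzero_LV n_pos last_nonzero_b)
  qed
  ultimately have "last_nonzero (\<lambda>r. \<Sum>i\<in>Z. c (b i) * LV n (b i) r) (Max ((\<lambda>i. i mod n) ` Z))"
    by (rule last_nonzero_sum)
  moreover have "(\<Sum>i\<in>Z. c (b i) * LV n (b i) r) = 0" for r
  proof -
    have "(\<Sum>i\<in>Z. c (b i) * LV n (b i) r) = (\<Sum>i\<in>q. c (b i) * LV n (b i) r)"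
      unfolding Z_def by (intro sum.mono_neutral_left) auto
    also have "\<dots> = (\<Sum>g\<in>b ` q. c g * LV n g r)"
      by (simp only: sum.reindex[OF inj_on_b] comp_def)
    finally show ?thesis using assms by simp
  qed
  ultimately show False by (simp add: last_nonzero_def)
qed

end

theorem theorem1:
  fixes a :: "nat \<Rightarrow> 'a::field poly" and n d :: nat
  assumes "n > 1"
    and "polyvec n a"
    and "\<exists>r<n. a r \<noteq> 0"
    and "d = pvdeg n a"
  shows "is_mu_basis n a
           ((\<lambda>i. flat n d (bvec (2*d+1) (n*(d+1)) (coeff_mat n a) i))
              ` basic_nonpivots n (2*d+1) (n*(d+1)) (coeff_mat n a))"
proof -
  interpret mu_basis_setting a n d
    using assms by unfold_locales simp_all
  have "finite (b ` q)" by simp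
  moreover have "card (b ` q) = n - 1"
    using card_image[OF inj_on_b] card_basic_nonpivots by simp
  moreover have "b ` q \<subseteq> syz n a"
    using b_in_syz basic_nonpivotsD by blast
  ultimately show ?thesis
    unfolding is_mu_basis_def using LV_b_independent syz_in_span_b b_free by blast
qed

end
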